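(* Let $\mathsf{L}$ be a logic, $\mathcal{C}$ a class of $\mathsf{L}$-models, and $\Theta$ an $(\mathsf{L},\mathcal{C})$-pair (with, for each $M\in\mathcal{C}$, fixed functions $\mathsf{sem}^o_M$ witnessing the inductive property and a fixed set $\mathsf{SAT}_M$ as described in the context). Then the semantic enumeration procedure described in the context, run on a $\mathcal{C}$-sample $\mathcal{S}=(\mathcal{P},\mathcal{N})$, accepts if and only if $\mathcal{S}$ is $\mathsf{L}$-separable; that is, it decides the passive learning problem $\mathsf{PvLn}(\mathsf{L},\mathcal{C})$.
   Context: A logic $\mathsf{L}$ is given by a syntax $(\mathcal{T},\mathcal{T}_f,\mathsf{Op},(\tau_o)_{o\in\mathsf{Op}},T)$: $\mathcal{T}$ a non-empty finite set of types, $\emptyset\neq\mathcal{T}_f\subseteq\mathcal{T}$ final types, $\mathsf{Op}=\mathsf{Op}_0\uplus\mathsf{Op}_1\uplus\mathsf{Op}_2$ operators of arity 0,1,2 with $\mathsf{Op}_0\ne\emptyset$, each $o$ with a type $\tau_o\in\mathcal{T}$ and sets $T(o,i)\subseteq\mathcal{T}$ of allowed argument types. Formulas of type $\tau$, $\mathsf{Fm}_{\mathsf{L}}(\tau)$, are built inductively: $o\in\mathsf{Op}_0$ has type $\tau_o$; $o(\varphi_1)$ (resp. $o(\varphi_1,\varphi_2)$) has type $\tau_o$ when each $\varphi_i$ has a type in $T(o,i)$. $\mathsf{Fm}_{\mathsf{L}}(X)=\bigcup_{\tau\in X}\mathsf{Fm}_{\mathsf{L}}(\tau)$; final formulas are $\mathsf{Fm}^f_{\mathsf{L}}=\mathsf{Fm}_{\mathsf{L}}(\mathcal{T}_f)$.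 An $\mathsf{L}$-model $M$ has a satisfaction relation $M\models\varphi$ for final formulas; a class of $\mathsf{L}$-models is a set of them. A $\mathcal{C}$-sample is a pair $(\mathcal{P},\mathcal{N})$ of finite subsets of $\mathcal{C}$; it is $\mathsf{L}$-separable if some final formula $\varphi$ has $M\models\varphi$ for all $M\in\mathcal{P}$ and $M\not\models\varphi$ for all $M\in\mathcal{N}$. $\mathsf{PvLn}(\mathsf{L},\mathcal{C})$: given a $\mathcal{C}$-sample, decide whether it is $\mathsf{L}$-separable. An $(\mathsf{L},M)$-pair $(\mathsf{SEM}_M,\mathsf{sem}_M)$: a finite set $\mathsf{SEM}_M=\bigcup_\tau\mathsf{SEM}_M(\tau)$ (pairwise disjoint parts) and $\mathsf{sem}_M:\mathsf{Fm}_{\mathsf{L}}\to\mathsf{SEM}_M$ mapping type-$\tau$ formulas into $\mathsf{SEM}_M(\tau)$; $\mathsf{SEM}_M(X)=\bigcup_{\tau\in X}\mathsf{SEM}_M(\tau)$. It captures the $\mathsf{L}$-semantics if for all $\tau$ and all final $\varphi,\varphi'$ of type $\tau$ with $\mathsf{sem}_M(\varphi)=\mathsf{sem}_M(\varphi')$ we have $M\models\varphi$ iff $M\models\varphi'$; in that case fix a subset $\mathsf{SAT}_M\subseteq\mathsf{SEM}_M$ such that for every final $\varphi$, $M\models\varphi$ iff $\mathsf{sem}_M(\varphi)\in\mathsf{SAT}_M$. It satisfies the inductive property if for each $o\in\mathsf{Op}_1$ there is $\mathsf{sem}^o_M:\mathsf{SEM}_M(T(o,1))\to\mathsf{SEM}_M(\tau_o)$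 with $\mathsf{sem}_M(o(\varphi_1))=\mathsf{sem}^o_M(\mathsf{sem}_M(\varphi_1))$ for all $\varphi_1\in\mathsf{Fm}_{\mathsf{L}}(T(o,1))$, and for each $o\in\mathsf{Op}_2$ there is $\mathsf{sem}^o_M:\mathsf{SEM}_M(T(o,1))\times\mathsf{SEM}_M(T(o,2))\to\mathsf{SEM}_M(\tau_o)$ with $\mathsf{sem}_M(o(\varphi_1,\varphi_2))=\mathsf{sem}^o_M(\mathsf{sem}_M(\varphi_1),\mathsf{sem}_M(\varphi_2))$; fix such functions. An $(\mathsf{L},\mathcal{C})$-pair is a family $(\Theta_M)_{M\in\mathcal{C}}$ of $(\mathsf{L},M)$-pairs each capturing the $\mathsf{L}$-semantics and satisfying the inductive property. The procedure on input $\mathcal{S}=(\mathcal{P},\mathcal{N})$ (with $\mathcal{S}$ identified with $\mathcal{P}\cup\mathcal{N}$): start with the set $R$ of pairs $((\mathsf{sem}_M(o))_{M\in\mathcal{S}},\tau_o)$ for $o\in\mathsf{Op}_0$; repeatedly, until $R$ no longer changes, add for every $o\in\mathsf{Op}_1$ and every $(X,\tau_1)\in R$ with $\tau_1\in T(o,1)$ the pair $((\mathsf{sem}^o_M(X[M]))_{M\in\mathcal{S}},\tau_o)$, and for every $o\in\mathsf{Op}_2$ and all $(X_1,\tau_1),(X_2,\tau_2)\in R$ with $\tau_i\in T(o,i)$ the pair $((\mathsf{sem}^o_M(X_1[M],X_2[M]))_{M\in\mathcal{S}},\tau_o)$. Finally, accept iff there is $(X,\tau)\in R$ with $\tau\in\mathcal{T}_f$,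 $X[M]\in\mathsf{SAT}_M$ for all $M\in\mathcal{P}$ and $X[M]\in\mathsf{SEM}_M\setminus\mathsf{SAT}_M$ for all $M\in\mathcal{N}$; otherwise reject. *)

theory Defs
  imports Main "HOL-Library.FuncSet"
begin

record ('ty, 'op) logic_syntax =
  types  :: "'ty set"
  finals :: "'ty set"
  ops    :: "'op set"
  arity  :: "'op \<Rightarrow> nat"
  otype  :: "'op \<Rightarrow> 'ty"
  argT   :: "'op \<Rightarrow> nat \<Rightarrow> 'ty set"

definition wf_syntax :: "('ty, 'op) logic_syntax \<Rightarrow> bool" where
  "wf_syntax L \<longleftrightarrow>
     finite (types L) \<and> types L \<noteq> {} \<and>
     finals L \<noteq> {} \<and> finals L \<subseteq> types L \<and>
     (\<forall>p\<in>ops L. arity L p \<le> 2 \<and> otype L p \<in> types L \<and>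
        (\<forall>i. argT L p i \<subseteq> types L)) \<and>
     (\<exists>p\<in>ops L. arity L p = 0)"

datatype 'op fm = Op0 'op | Op1 'op "'op fm" | Op2 'op "'op fm" "'op fm"

fun head :: "'op fm \<Rightarrow> 'op" where
  "head (Op0 p) = p"
| "head (Op1 p _) = p"
| "head (Op2 p _ _) = p"

fun wf_fm :: "('ty, 'op) logic_syntax \<Rightarrow> 'op fm \<Rightarrow> bool" where
  "wf_fm L (Op0 p) \<longleftrightarrow> p \<in> ops L \<and> arity L p = 0"
| "wf_fm L (Op1 p f) \<longleftrightarrow> p \<in> ops L \<and> arity L p = 1 \<and> wf_fm L f \<and>
      otype L (head f) \<in> argT L p 1"
| "wf_fm L (Op2 p f g) \<longleftrightarrow> p \<in> ops L \<and> arity L p = 2 \<and> wf_fm L f \<and> wf_fm L g \<and>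
      otype L (head f) \<in> argT L p 1 \<and> otype L (head g) \<in> argT L p 2"

definition Fm :: "('ty, 'op) logic_syntax \<Rightarrow> 'ty \<Rightarrow> 'op fm set" where
  "Fm L \<tau> = {\<phi>. wf_fm L \<phi> \<and> otype L (head \<phi>) = \<tau>}"

definition FmS :: "('ty, 'op) logic_syntax \<Rightarrow> 'ty set \<Rightarrow> 'op fm set" where
  "FmS L X = (\<Union>\<tau>\<in>X. Fm L \<tau>)"

definition Fm_final :: "('ty, 'op) logic_syntax \<Rightarrow> 'op fm set" where
  "Fm_final L = FmS L (finals L)"

text \<open>Models of type 'm; sat M \<phi> is the satisfaction relation (only used on final formulas).\<close>

definition sample :: "'m set \<Rightarrow> 'm set \<Rightarrow> 'm set \<Rightarrow> bool" where
  "sample C P N \<longleftrightarrow> finite P \<and> finite N \<and> P \<subseteq> C \<and> N \<subseteq> C"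

definition separable ::
  "('ty, 'op) logic_syntax \<Rightarrow> ('m \<Rightarrow> 'op fm \<Rightarrow> bool) \<Rightarrow> 'm set \<Rightarrow> 'm set \<Rightarrow> bool" where
  "separable L sat P N \<longleftrightarrow>
     (\<exists>\<phi>\<in>Fm_final L. (\<forall>M\<in>P. sat M \<phi>) \<and> (\<forall>M\<in>N. \<not> sat M \<phi>))"

record ('m, 'ty, 'op, 'v) sem_pair =
  SEMt :: "'m \<Rightarrow> 'ty \<Rightarrow> 'v set"
  sem  :: "'m \<Rightarrow> 'op fm \<Rightarrow> 'v"
  sem1 :: "'m \<Rightarrow> 'op \<Rightarrow> 'v \<Rightarrow> 'v"
  sem2 :: "'m \<Rightarrow> 'op \<Rightarrow> 'v \<Rightarrow> 'v \<Rightarrow> 'v"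
  SAT  :: "'m \<Rightarrow> 'v set"

definition SEMS :: "('m, 'ty, 'op, 'v) sem_pair \<Rightarrow> 'm \<Rightarrow> 'ty set \<Rightarrow> 'v set" where
  "SEMS \<Theta> M X = (\<Union>\<tau>\<in>X. SEMt \<Theta> M \<tau>)"

definition SEM :: "('ty, 'op) logic_syntax \<Rightarrow> ('m, 'ty, 'op, 'v) sem_pair \<Rightarrow> 'm \<Rightarrow> 'v set" where
  "SEM L \<Theta> M = SEMS \<Theta> M (types L)"

definition LM_pair :: "('ty, 'op) logic_syntax \<Rightarrow> ('m, 'ty, 'op, 'v) sem_pair \<Rightarrow> 'm \<Rightarrow> bool" where
  "LM_pair L \<Theta> M \<longleftrightarrow>
     finite (SEM L \<Theta> M) \<and>
     (\<forall>\<tau>\<in>types L. \<forall>\<tau>'\<in>types L. \<tau> \<noteq> \<tau>' \<longrightarrow> SEMt \<Theta> M \<tau> \<inter> SEMt \<Theta> M \<tau>' = {}) \<and>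
     (\<forall>\<tau>\<in>types L. \<forall>\<phi>\<in>Fm L \<tau>. sem \<Theta> M \<phi> \<in> SEMt \<Theta> M \<tau>)"

definition captures ::
  "('ty, 'op) logic_syntax \<Rightarrow> ('m \<Rightarrow> 'op fm \<Rightarrow> bool) \<Rightarrow> ('m, 'ty, 'op, 'v) sem_pair \<Rightarrow> 'm \<Rightarrow> bool" where
  "captures L sat \<Theta> M \<longleftrightarrow>
     (\<forall>\<tau>\<in>finals L. \<forall>\<phi>\<in>Fm L \<tau>. \<forall>\<phi>'\<in>Fm L \<tau>.
        sem \<Theta> M \<phi> = sem \<Theta> M \<phi>' \<longrightarrow> (sat M \<phi> \<longleftrightarrow> sat M \<phi>'))"

definition SAT_ok ::
  "('ty, 'op) logic_syntax \<Rightarrow> ('m \<Rightarrow> 'op fm \<Rightarrow> bool) \<Rightarrow> ('m, 'ty, 'op, 'v) sem_pair \<Rightarrow> 'm \<Rightarrow> bool" where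
  "SAT_ok L sat \<Theta> M \<longleftrightarrow>
     SAT \<Theta> M \<subseteq> SEM L \<Theta> M \<and>
     (\<forall>\<phi>\<in>Fm_final L. sat M \<phi> \<longleftrightarrow> sem \<Theta> M \<phi> \<in> SAT \<Theta> M)"

text \<open>Inductive property, witnessed by the fixed functions sem1 / sem2.\<close>
definition inductive_prop :: "('ty, 'op) logic_syntax \<Rightarrow> ('m, 'ty, 'op, 'v) sem_pair \<Rightarrow> 'm \<Rightarrow> bool" where
  "inductive_prop L \<Theta> M \<longleftrightarrow>
     (\<forall>p\<in>ops L. arity L p = 1 \<longrightarrow>
        (\<forall>x\<in>SEMS \<Theta> M (argT L p 1). sem1 \<Theta> M p x \<in> SEMt \<Theta> M (otype L p)) \<and>
        (\<forall>\<phi>\<in>FmS L (argT L p 1). sem \<Theta> M (Op1 p \<phi>) = sem1 \<Theta> M p (sem \<Theta> M \<phi>))) \<and>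
     (\<forall>p\<in>ops L. arity L p = 2 \<longrightarrow>
        (\<forall>x\<in>SEMS \<Theta> M (argT L p 1). \<forall>y\<in>SEMS \<Theta> M (argT L p 2).
            sem2 \<Theta> M p x y \<in> SEMt \<Theta> M (otype L p)) \<and>
        (\<forall>\<phi>\<in>FmS L (argT L p 1). \<forall>\<psi>\<in>FmS L (argT L p 2).
            sem \<Theta> M (Op2 p \<phi> \<psi>) = sem2 \<Theta> M p (sem \<Theta> M \<phi>) (sem \<Theta> M \<psi>)))"

definition LC_pair ::
  "('ty, 'op) logic_syntax \<Rightarrow> ('m \<Rightarrow> 'op fm \<Rightarrow> bool) \<Rightarrow> 'm set \<Rightarrow> ('m, 'ty, 'op, 'v) sem_pair \<Rightarrow> bool" where
  "LC_pair L sat C \<Theta> \<longleftrightarrow>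
     (\<forall>M\<in>C. LM_pair L \<Theta> M \<and> captures L sat \<Theta> M \<and> SAT_ok L sat \<Theta> M \<and> inductive_prop L \<Theta> M)"

text \<open>Vectors (X[M])_{M \<in> S} are represented as functions restricted to S.\<close>

definition enum_init ::
  "('ty, 'op) logic_syntax \<Rightarrow> ('m, 'ty, 'op, 'v) sem_pair \<Rightarrow> 'm set \<Rightarrow> (('m \<Rightarrow> 'v) \<times> 'ty) set" where
  "enum_init L \<Theta> S =
     {(restrict (\<lambda>M. sem \<Theta> M (Op0 p)) S, otype L p) | p. p \<in> ops L \<and> arity L p = 0}"

definition enum_step ::
  "('ty, 'op) logic_syntax \<Rightarrow> ('m, 'ty, 'op, 'v) sem_pair \<Rightarrow> 'm set \<Rightarrow>
     (('m \<Rightarrow> 'v) \<times> 'ty) set \<Rightarrow> (('m \<Rightarrow> 'v) \<times> 'ty) set" where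
  "enum_step L \<Theta> S R = R \<union>
     {(restrict (\<lambda>M. sem1 \<Theta> M p (X M)) S, otype L p) | p X \<tau>1.
         p \<in> ops L \<and> arity L p = 1 \<and> (X, \<tau>1) \<in> R \<and> \<tau>1 \<in> argT L p 1} \<union>
     {(restrict (\<lambda>M. sem2 \<Theta> M p (X1 M) (X2 M)) S, otype L p) | p X1 \<tau>1 X2 \<tau>2.
         p \<in> ops L \<and> arity L p = 2 \<and> (X1, \<tau>1) \<in> R \<and> (X2, \<tau>2) \<in> R \<and>
         \<tau>1 \<in> argT L p 1 \<and> \<tau>2 \<in> argT L p 2}"

definition enum_R ::
  "('ty, 'op) logic_syntax \<Rightarrow> ('m, 'ty, 'op, 'v) sem_pair \<Rightarrow> 'm set \<Rightarrow> nat \<Rightarrow> (('m \<Rightarrow> 'v) \<times> 'ty) set" where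
  "enum_R L \<Theta> S k = (enum_step L \<Theta> S ^^ k) (enum_init L \<Theta> S)"

definition enum_terminates ::
  "('ty, 'op) logic_syntax \<Rightarrow> ('m, 'ty, 'op, 'v) sem_pair \<Rightarrow> 'm set \<Rightarrow> 'm set \<Rightarrow> bool" where
  "enum_terminates L \<Theta> P N \<longleftrightarrow>
     (\<exists>k. enum_R L \<Theta> (P \<union> N) (Suc k) = enum_R L \<Theta> (P \<union> N) k)"

definition enum_final ::
  "('ty, 'op) logic_syntax \<Rightarrow> ('m, 'ty, 'op, 'v) sem_pair \<Rightarrow> 'm set \<Rightarrow> 'm set \<Rightarrow> (('m \<Rightarrow> 'v) \<times> 'ty) set" where
  "enum_final L \<Theta> P N =
     enum_R L \<Theta> (P \<union> N) (LEAST k. enum_R L \<Theta> (P \<union> N) (Suc k) = enum_R L \<Theta> (P \<union> N) k)"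

definition enum_accepts ::
  "('ty, 'op) logic_syntax \<Rightarrow> ('m, 'ty, 'op, 'v) sem_pair \<Rightarrow> 'm set \<Rightarrow> 'm set \<Rightarrow> bool" where
  "enum_accepts L \<Theta> P N \<longleftrightarrow>
     (\<exists>(X, \<tau>)\<in>enum_final L \<Theta> P N. \<tau> \<in> finals L \<and>
        (\<forall>M\<in>P. X M \<in> SAT \<Theta> M) \<and> (\<forall>M\<in>N. X M \<in> SEM L \<Theta> M - SAT \<Theta> M))"

end

theory Submission
  imports Defs
begin

(* Taken over all rounds, the procedure produces exactly the pairs (sem_vector S phi, tau) with
   phi a formula of type tau: soundness follows by induction on the round and completeness by
   induction on phi, both from the inductive property.
   All these pairs lie in the finite set (Pi M:S. SEM_M) x T, so the increasing rounds
   stabilise and the final R is the union of all rounds. A final vector is accepted iff the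
   meanings of some final phi separate the sample via SAT_M, which by the choice of SAT_M is
   separation by phi itself. *)

lemma funpow_stabilises_if_bounded:
  fixes g :: "'a set \<Rightarrow> 'a set"
  assumes inflationary: "\<And>X. X \<subseteq> g X"
    and bounded: "\<And>n. (g ^^ n) A \<subseteq> B" and "finite B"
  shows "\<exists>k. (g ^^ Suc k) A = (g ^^ k) A"
proof -
  let ?f = "\<lambda>n. (g ^^ n) A"
  have "finite (range ?f)"
    using bounded \<open>finite B\<close> by (blast intro: finite_subset[of _ "Pow B"])
  moreover have "mono ?f"
    using inflationary by (simp add: mono_iff_le_Suc)
  moreover have "\<forall>n. ?f n = ?f (Suc n) \<longrightarrow> ?f (Suc n) = ?f (Suc (Suc n))"
    by simp
  ultimately obtain k where "\<forall>n\<ge>k. ?f k = ?f n"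
    by (blast dest: finite_mono_remains_stable_implies_strict_prefix)
  then show ?thesis
    by (metis le_Suc_eq order_refl)
qed

lemma Union_funpow_eq_if_stable:
  fixes g :: "'a set \<Rightarrow> 'a set"
  assumes inflationary: "\<And>X. X \<subseteq> g X"
    and stable: "(g ^^ Suc k) A = (g ^^ k) A"
  shows "(\<Union>n. (g ^^ n) A) = (g ^^ k) A"
proof -
  have stays: "(g ^^ (k + m)) A = (g ^^ k) A" for m
    using stable by (induction m) auto
  have "mono (\<lambda>n. (g ^^ n) A)"
    using inflationary by (simp add: mono_iff_le_Suc)
  have "(g ^^ n) A \<subseteq> (g ^^ k) A" for n
  proof (cases "n \<le> k")
    case True
    then show ?thesis using \<open>mono (\<lambda>n. (g ^^ n) A)\<close> by (auto dest: monoD)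
  next
    case False
    then obtain m where "n = k + m" by (metis le_add_diff_inverse nat_le_linear)
    then show ?thesis using stays by simp
  qed
  then show ?thesis
    by blast
qed

abbreviation sem_vector :: "('m, 'ty, 'op, 'v) sem_pair \<Rightarrow> 'm set \<Rightarrow> 'op fm \<Rightarrow> 'm \<Rightarrow> 'v" where
  "sem_vector \<Theta> S \<phi> \<equiv> restrict (\<lambda>M. sem \<Theta> M \<phi>) S"

lemma Fm_type_in_types:
  assumes "wf_syntax L" and "\<phi> \<in> Fm L \<tau>"
  shows "\<tau> \<in> types L"
proof -
  have "head \<phi> \<in> ops L"
    using \<open>\<phi> \<in> Fm L \<tau>\<close> by (cases \<phi>) (auto simp: Fm_def)
  then show ?thesis
    using assms by (auto simp: wf_syntax_def Fm_def)
qed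

lemma sem_in_SEM:
  assumes "LM_pair L \<Theta> M" and "\<tau> \<in> types L" and "\<phi> \<in> Fm L \<tau>"
  shows "sem \<Theta> M \<phi> \<in> SEM L \<Theta> M"
  using assms unfolding LM_pair_def SEM_def SEMS_def by blast

lemma sem_vector_Op1:
  assumes "\<forall>M\<in>S. inductive_prop L \<Theta> M"
    and "p \<in> ops L" "arity L p = 1" "\<phi> \<in> FmS L (argT L p 1)"
  shows "sem_vector \<Theta> S (Op1 p \<phi>) = restrict (\<lambda>M. sem1 \<Theta> M p (sem_vector \<Theta> S \<phi> M)) S"
  using assms by (auto simp: inductive_prop_def intro!: restrict_ext)

lemma sem_vector_Op2:
  assumes "\<forall>M\<in>S. inductive_prop L \<Theta> M"
    and "p \<in> ops L" "arity L p = 2" "\<phi> \<in> FmS L (argT L p 1)" "\<psi> \<in> FmS L (argT L p 2)"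
  shows "sem_vector \<Theta> S (Op2 p \<phi> \<psi>)
    = restrict (\<lambda>M. sem2 \<Theta> M p (sem_vector \<Theta> S \<phi> M) (sem_vector \<Theta> S \<psi> M)) S"
  using assms by (auto simp: inductive_prop_def intro!: restrict_ext)

lemma enum_R_0: "enum_R L \<Theta> S 0 = enum_init L \<Theta> S"
  by (simp add: enum_R_def)

lemma enum_R_Suc: "enum_R L \<Theta> S (Suc k) = enum_step L \<Theta> S (enum_R L \<Theta> S k)"
  by (simp add: enum_R_def)

lemma enum_step_inflationary: "R \<subseteq> enum_step L \<Theta> S R"
  unfolding enum_step_def by blast

lemma enum_R_mono:
  assumes "k \<le> k'"
  shows "enum_R L \<Theta> S k \<subseteq> enum_R L \<Theta> S k'"
  using assms by (induction k' rule: dec_induct) (auto simp: enum_R_Suc enum_step_def)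

lemma enum_R_sound:
  assumes "\<forall>M\<in>S. inductive_prop L \<Theta> M"
    and "(X, \<tau>) \<in> enum_R L \<Theta> S k"
  shows "\<exists>\<phi>\<in>Fm L \<tau>. X = sem_vector \<Theta> S \<phi>"
  using assms(2)
proof (induction k arbitrary: X \<tau>)
  case 0
  then obtain p where "p \<in> ops L" "arity L p = 0" "X = sem_vector \<Theta> S (Op0 p)" "\<tau> = otype L p"
    by (auto simp: enum_R_0 enum_init_def)
  moreover from this have "Op0 p \<in> Fm L \<tau>"
    by (simp add: Fm_def)
  ultimately show ?case by blast
next
  case (Suc k)
  then consider "(X, \<tau>) \<in> enum_R L \<Theta> S k"
    | p Y \<tau>1 where "p \<in> ops L" "arity L p = 1" "(Y, \<tau>1) \<in> enum_R L \<Theta> S k" "\<tau>1 \<in> argT L p 1"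
        "X = restrict (\<lambda>M. sem1 \<Theta> M p (Y M)) S" "\<tau> = otype L p"
    | p Y1 \<tau>1 Y2 \<tau>2 where "p \<in> ops L" "arity L p = 2"
        "(Y1, \<tau>1) \<in> enum_R L \<Theta> S k" "(Y2, \<tau>2) \<in> enum_R L \<Theta> S k"
        "\<tau>1 \<in> argT L p 1" "\<tau>2 \<in> argT L p 2"
        "X = restrict (\<lambda>M. sem2 \<Theta> M p (Y1 M) (Y2 M)) S" "\<tau> = otype L p"
    unfolding enum_R_Suc enum_step_def by blast
  then show ?case
  proof cases
    case 1
    then show ?thesis using Suc.IH by blast
  next
    case 2
    then obtain \<phi> where "\<phi> \<in> Fm L \<tau>1" "Y = sem_vector \<Theta> S \<phi>"
      using Suc.IH by blast
    with 2 have "Op1 p \<phi> \<in> Fm L \<tau>" "X = sem_vector \<Theta> S (Op1 p \<phi>)"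
      using sem_vector_Op1[OF assms(1)] by (auto simp: Fm_def FmS_def)
    then show ?thesis by blast
  next
    case 3
    then obtain \<phi> \<psi> where "\<phi> \<in> Fm L \<tau>1" "Y1 = sem_vector \<Theta> S \<phi>"
      and "\<psi> \<in> Fm L \<tau>2" "Y2 = sem_vector \<Theta> S \<psi>"
      using Suc.IH by meson
    with 3 have "Op2 p \<phi> \<psi> \<in> Fm L \<tau>" "X = sem_vector \<Theta> S (Op2 p \<phi> \<psi>)"
      using sem_vector_Op2[OF assms(1)] by (auto simp: Fm_def FmS_def)
    then show ?thesis by blast
  qed
qed

lemma enum_step_Op1I:
  assumes "p \<in> ops L" "arity L p = 1" "(X, \<tau>1) \<in> R" "\<tau>1 \<in> argT L p 1"
  shows "(restrict (\<lambda>M. sem1 \<Theta> M p (X M)) S, otype L p) \<in> enum_step L \<Theta> S R"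
  using assms unfolding enum_step_def by blast

lemma enum_step_Op2I:
  assumes "p \<in> ops L" "arity L p = 2" "(X1, \<tau>1) \<in> R" "\<tau>1 \<in> argT L p 1"
    and "(X2, \<tau>2) \<in> R" "\<tau>2 \<in> argT L p 2"
  shows "(restrict (\<lambda>M. sem2 \<Theta> M p (X1 M) (X2 M)) S, otype L p) \<in> enum_step L \<Theta> S R"
  using assms unfolding enum_step_def by blast

lemma enum_R_complete:
  assumes "\<forall>M\<in>S. inductive_prop L \<Theta> M" and "wf_fm L \<phi>"
  shows "\<exists>k. (sem_vector \<Theta> S \<phi>, otype L (head \<phi>)) \<in> enum_R L \<Theta> S k"
  using assms(2)
proof (induction \<phi>)
  case (Op0 p)
  then have "(sem_vector \<Theta> S (Op0 p), otype L p) \<in> enum_R L \<Theta> S 0"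
    by (auto simp: enum_R_0 enum_init_def)
  then show ?case unfolding head.simps by blast
next
  case (Op1 p \<phi>)
  then obtain k where IH: "(sem_vector \<Theta> S \<phi>, otype L (head \<phi>)) \<in> enum_R L \<Theta> S k"
    by (meson wf_fm.simps)
  have eq: "sem_vector \<Theta> S (Op1 p \<phi>) = restrict (\<lambda>M. sem1 \<Theta> M p (sem_vector \<Theta> S \<phi> M)) S"
    by (rule sem_vector_Op1[OF assms(1)]) (use Op1.prems in \<open>auto simp: FmS_def Fm_def\<close>)
  have "(restrict (\<lambda>M. sem1 \<Theta> M p (sem_vector \<Theta> S \<phi> M)) S, otype L p) \<in> enum_R L \<Theta> S (Suc k)"
    unfolding enum_R_Suc by (rule enum_step_Op1I[OF _ _ IH]) (use Op1.prems in auto)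
  then show ?case unfolding head.simps eq by blast
next
  case (Op2 p \<phi> \<psi>)
  then obtain k1 k2 where "(sem_vector \<Theta> S \<phi>, otype L (head \<phi>)) \<in> enum_R L \<Theta> S k1"
    and "(sem_vector \<Theta> S \<psi>, otype L (head \<psi>)) \<in> enum_R L \<Theta> S k2"
    by (meson wf_fm.simps)
  then have IH: "(sem_vector \<Theta> S \<phi>, otype L (head \<phi>)) \<in> enum_R L \<Theta> S (max k1 k2)"
    "(sem_vector \<Theta> S \<psi>, otype L (head \<psi>)) \<in> enum_R L \<Theta> S (max k1 k2)"
    by (meson enum_R_mono max.cobounded1 max.cobounded2 subsetD)+
  have eq: "sem_vector \<Theta> S (Op2 p \<phi> \<psi>)
      = restrict (\<lambda>M. sem2 \<Theta> M p (sem_vector \<Theta> S \<phi> M) (sem_vector \<Theta> S \<psi> M)) S"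
    by (rule sem_vector_Op2[OF assms(1)]) (use Op2.prems in \<open>auto simp: FmS_def Fm_def\<close>)
  have "(restrict (\<lambda>M. sem2 \<Theta> M p (sem_vector \<Theta> S \<phi> M) (sem_vector \<Theta> S \<psi> M)) S, otype L p)
      \<in> enum_R L \<Theta> S (Suc (max k1 k2))"
    unfolding enum_R_Suc by (rule enum_step_Op2I[OF _ _ IH(1) _ IH(2)]) (use Op2.prems in auto)
  then show ?case unfolding head.simps eq by blast
qed

lemma mem_Union_enum_R_iff:
  assumes "\<forall>M\<in>S. inductive_prop L \<Theta> M"
  shows "(X, \<tau>) \<in> (\<Union>k. enum_R L \<Theta> S k) \<longleftrightarrow> (\<exists>\<phi>\<in>Fm L \<tau>. X = sem_vector \<Theta> S \<phi>)"
  using enum_R_sound[OF assms] enum_R_complete[OF assms] by (auto simp: Fm_def)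

lemma enum_R_subset_vectors:
  assumes "wf_syntax L" and "\<forall>M\<in>S. LM_pair L \<Theta> M \<and> inductive_prop L \<Theta> M"
  shows "enum_R L \<Theta> S k \<subseteq> PiE S (SEM L \<Theta>) \<times> types L"
proof
  fix x
  assume "x \<in> enum_R L \<Theta> S k"
  then obtain X \<tau> \<phi> where "x = (X, \<tau>)" "\<phi> \<in> Fm L \<tau>" "X = sem_vector \<Theta> S \<phi>"
    using enum_R_sound assms(2) by (metis surj_pair)
  moreover have "\<tau> \<in> types L"
    using \<open>\<phi> \<in> Fm L \<tau>\<close> by (rule Fm_type_in_types[OF assms(1)])
  ultimately show "x \<in> PiE S (SEM L \<Theta>) \<times> types L"
    using assms(2) by (auto intro: sem_in_SEM)
qed

lemma enum_terminates_if_finite: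
  assumes "wf_syntax L" and "finite (P \<union> N)"
    and "\<forall>M\<in>P \<union> N. LM_pair L \<Theta> M \<and> inductive_prop L \<Theta> M"
  shows "enum_terminates L \<Theta> P N"
proof -
  have "finite (PiE (P \<union> N) (SEM L \<Theta>) \<times> types L)"
    using assms by (intro finite_cartesian_product finite_PiE) (auto simp: wf_syntax_def LM_pair_def)
  then show ?thesis
    unfolding enum_terminates_def enum_R_def
    by (rule funpow_stabilises_if_bounded[OF enum_step_inflationary
          enum_R_subset_vectors[OF assms(1,3), unfolded enum_R_def]])
qed

lemma enum_final_eq_Union_enum_R:
  assumes "enum_terminates L \<Theta> P N"
  shows "enum_final L \<Theta> P N = (\<Union>k. enum_R L \<Theta> (P \<union> N) k)"
proof -
  let ?k = "LEAST k. enum_R L \<Theta> (P \<union> N) (Suc k) = enum_R L \<Theta> (P \<union> N) k"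
  have "enum_R L \<Theta> (P \<union> N) (Suc ?k) = enum_R L \<Theta> (P \<union> N) ?k"
    using assms unfolding enum_terminates_def by (rule LeastI_ex)
  then show ?thesis
    unfolding enum_final_def enum_R_def
    by (rule Union_funpow_eq_if_stable[OF enum_step_inflationary, symmetric])
qed

definition sem_separates ::
  "('ty, 'op) logic_syntax \<Rightarrow> ('m, 'ty, 'op, 'v) sem_pair \<Rightarrow> 'm set \<Rightarrow> 'm set \<Rightarrow> 'op fm \<Rightarrow> bool" where
  "sem_separates L \<Theta> P N \<phi> \<longleftrightarrow>
     (\<forall>M\<in>P. sem \<Theta> M \<phi> \<in> SAT \<Theta> M) \<and> (\<forall>M\<in>N. sem \<Theta> M \<phi> \<in> SEM L \<Theta> M - SAT \<Theta> M)"

lemma enum_accepts_iff_sem_separates: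
  assumes "enum_terminates L \<Theta> P N" and "\<forall>M\<in>P \<union> N. inductive_prop L \<Theta> M"
  shows "enum_accepts L \<Theta> P N \<longleftrightarrow> (\<exists>\<phi>\<in>Fm_final L. sem_separates L \<Theta> P N \<phi>)"
proof
  assume "enum_accepts L \<Theta> P N"
  then obtain X \<tau> where X: "(X, \<tau>) \<in> (\<Union>k. enum_R L \<Theta> (P \<union> N) k)" "\<tau> \<in> finals L"
    "\<forall>M\<in>P. X M \<in> SAT \<Theta> M" "\<forall>M\<in>N. X M \<in> SEM L \<Theta> M - SAT \<Theta> M"
    unfolding enum_accepts_def enum_final_eq_Union_enum_R[OF assms(1)] by blast
  then obtain \<phi> where "\<phi> \<in> Fm L \<tau>" "X = sem_vector \<Theta> (P \<union> N) \<phi>"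
    using mem_Union_enum_R_iff[OF assms(2)] by blast
  have "\<phi> \<in> Fm_final L"
    using X(2) \<open>\<phi> \<in> Fm L \<tau>\<close> unfolding Fm_final_def FmS_def by blast
  moreover have "sem_separates L \<Theta> P N \<phi>"
    using X(3,4) \<open>X = sem_vector \<Theta> (P \<union> N) \<phi>\<close> by (simp add: sem_separates_def)
  ultimately show "\<exists>\<phi>\<in>Fm_final L. sem_separates L \<Theta> P N \<phi>" ..
next
  assume "\<exists>\<phi>\<in>Fm_final L. sem_separates L \<Theta> P N \<phi>"
  then obtain \<phi> \<tau> where "\<tau> \<in> finals L" "\<phi> \<in> Fm L \<tau>" "sem_separates L \<Theta> P N \<phi>"
    unfolding Fm_final_def FmS_def by blast
  moreover from \<open>\<phi> \<in> Fm L \<tau>\<close> have "(sem_vector \<Theta> (P \<union> N) \<phi>, \<tau>) \<in> (\<Union>k. enum_R L \<Theta> (P \<union> N) k)"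
    using mem_Union_enum_R_iff[OF assms(2)] by blast
  ultimately show "enum_accepts L \<Theta> P N"
    unfolding enum_accepts_def enum_final_eq_Union_enum_R[OF assms(1)]
    by (intro bexI) (simp_all add: sem_separates_def)
qed

lemma separable_iff_sem_separates:
  assumes "wf_syntax L" and "\<forall>M\<in>P \<union> N. LM_pair L \<Theta> M \<and> SAT_ok L sat \<Theta> M"
  shows "separable L sat P N \<longleftrightarrow> (\<exists>\<phi>\<in>Fm_final L. sem_separates L \<Theta> P N \<phi>)"
proof -
  have "(\<forall>M\<in>P. sat M \<phi>) \<and> (\<forall>M\<in>N. \<not> sat M \<phi>) \<longleftrightarrow> sem_separates L \<Theta> P N \<phi>"
    if "\<phi> \<in> Fm_final L" for \<phi>
  proof -
    obtain \<tau> where "\<tau> \<in> types L" "\<phi> \<in> Fm L \<tau>"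
      using \<open>\<phi> \<in> Fm_final L\<close> Fm_type_in_types[OF assms(1)] unfolding Fm_final_def FmS_def by blast
    then have in_SEM: "sem \<Theta> M \<phi> \<in> SEM L \<Theta> M" if "M \<in> P \<union> N" for M
      using assms(2) that by (blast intro: sem_in_SEM)
    have sat_iff: "sat M \<phi> \<longleftrightarrow> sem \<Theta> M \<phi> \<in> SAT \<Theta> M" if "M \<in> P \<union> N" for M
      using assms(2) that \<open>\<phi> \<in> Fm_final L\<close> unfolding SAT_ok_def by blast
    have "(\<forall>M\<in>P. sat M \<phi>) \<longleftrightarrow> (\<forall>M\<in>P. sem \<Theta> M \<phi> \<in> SAT \<Theta> M)"
      using sat_iff by simp
    moreover have "(\<forall>M\<in>N. \<not> sat M \<phi>) \<longleftrightarrow> (\<forall>M\<in>N. sem \<Theta> M \<phi> \<in> SEM L \<Theta> M - SAT \<Theta> M)"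
      using sat_iff in_SEM by simp
    ultimately show ?thesis
      unfolding sem_separates_def by simp
  qed
  then show ?thesis
    unfolding separable_def by blast
qed

theorem theorem2:
  fixes L :: "('ty, 'op) logic_syntax"
    and sat :: "'m \<Rightarrow> 'op fm \<Rightarrow> bool"
    and C :: "'m set"
    and \<Theta> :: "('m, 'ty, 'op, 'v) sem_pair"
    and P N :: "'m set"
  assumes "wf_syntax L"
    and "LC_pair L sat C \<Theta>"
    and "sample C P N"
  shows "enum_terminates L \<Theta> P N \<and> (enum_accepts L \<Theta> P N \<longleftrightarrow> separable L sat P N)"
proof -
  have "finite (P \<union> N)" and "P \<union> N \<subseteq> C"
    using \<open>sample C P N\<close> by (auto simp: sample_def)
  then have models: "\<forall>M\<in>P \<union> N. LM_pair L \<Theta> M \<and> SAT_ok L sat \<Theta> M \<and> inductive_prop L \<Theta> M"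
    using \<open>LC_pair L sat C \<Theta>\<close> by (auto simp: LC_pair_def)
  then have "enum_terminates L \<Theta> P N"
    using enum_terminates_if_finite[OF \<open>wf_syntax L\<close> \<open>finite (P \<union> N)\<close>] by blast
  moreover have "enum_accepts L \<Theta> P N \<longleftrightarrow> (\<exists>\<phi>\<in>Fm_final L. sem_separates L \<Theta> P N \<phi>)"
    using models by (intro enum_accepts_iff_sem_separates[OF \<open>enum_terminates L \<Theta> P N\<close>]) blast
  moreover have "separable L sat P N \<longleftrightarrow> (\<exists>\<phi>\<in>Fm_final L. sem_separates L \<Theta> P N \<phi>)"
    using models by (intro separable_iff_sem_separates[OF \<open>wf_syntax L\<close>]) blast
  ultimately show ?thesis
    by simp
qed

end
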